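(* Let $\widehat{X}=(\widehat{X}(t))_{t\in[0,1]}$ and $\widehat{Y}=(\widehat{Y}(t))_{t\in[0,1]}$ be independent one-dimensional standard Brownian bridges on $[0,1]$ (Gaussian processes with $\widehat{X}(0)=\widehat{X}(1)=0$, mean zero and $\mathrm{Cov}(\widehat{X}(s),\widehat{X}(t))=s(1-t)$ for $0\le s<t\le 1$), and let $\mu$ be a probability density function supported on $[0,1]$. Define $M_0(t)=\int_0^t\mu(s)\,ds$, $M_1(t)=\int_0^t M_0(s)\,ds$, $M_2(t)=\int_0^t M_1(s)\,ds$. Then the average radius of gyration of the two-dimensional tracked Brownian bridge $(\widehat{X}(t),\widehat{Y}(t))_{t\in\widetilde S}$ in the limit $c\to\infty$, namely $$r^2:=2\,\mathbb{E}\left[\int_0^1 \widehat{X}(t)^2\mu(t)\,dt\right],$$ satisfies $$r^2=2M_1(1)-4M_2(1).$$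
   Context: Tracking setup: $S$ is a non-homogeneous Poisson point process on $[0,1]$ with intensity $\lambda(t)=c\mu(t)$, $c>0$, and $\widetilde S=S\cup\{0,1\}$; the tracked bridge is the set of observed locations $(\widehat{X}(t),\widehat{Y}(t))$, $t\in\widetilde S$. Its gyration tensor about the tether point $(0,0)$ has entries $T_{11}=\frac{1}{2+|S|}\sum_{t\in S}\widehat X(t)^2$, $T_{22}=\frac{1}{2+|S|}\sum_{t\in S}\widehat Y(t)^2$, $T_{12}=\frac{1}{2+|S|}\sum_{t\in S}\widehat X(t)\widehat Y(t)$, and its radius of gyration is $T_{11}+T_{22}$. As $c\to\infty$ these entries are replaced by $\int_0^1\widehat X(t)^2\mu(t)dt$, $\int_0^1\widehat Y(t)^2\mu(t)dt$, $\int_0^1\widehat X(t)\widehat Y(t)\mu(t)dt$, and the limiting average radius of gyration is defined to be $r^2=2\mathbb{E}[\int_0^1\widehat X(t)^2\mu(t)dt]$. *)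

theory Defs
  imports "HOL-Probability.Probability"
begin

definition gaussian_rv :: "'a measure \<Rightarrow> ('a \<Rightarrow> real) \<Rightarrow> bool" where
  "gaussian_rv M Z \<longleftrightarrow> Z \<in> borel_measurable M \<and>
     ((\<exists>m \<sigma>. \<sigma> > 0 \<and> distributed M lborel Z (normal_density m \<sigma>))
      \<or> (\<exists>c. AE \<omega> in M. Z \<omega> = c))"

definition std_brownian_bridge :: "'a measure \<Rightarrow> (real \<Rightarrow> 'a \<Rightarrow> real) \<Rightarrow> bool" where
  "std_brownian_bridge M X \<longleftrightarrow>
     (\<forall>t\<in>{0..1}. X t \<in> borel_measurable M) \<and>
     (\<forall>T c. finite T \<and> T \<subseteq> {0..1} \<longrightarrow>
        gaussian_rv M (\<lambda>\<omega>. \<Sum>t\<in>T. c t * X t \<omega>)) \<and>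
     (\<forall>t\<in>{0..1}. (\<integral>\<omega>. X t \<omega> \<partial>M) = 0) \<and>
     (\<forall>s\<in>{0..1}. \<forall>t\<in>{0..1}. s \<le> t \<longrightarrow>
        (\<integral>\<omega>. X s \<omega> * X t \<omega> \<partial>M) - (\<integral>\<omega>. X s \<omega> \<partial>M) * (\<integral>\<omega>. X t \<omega> \<partial>M)
          = s * (1 - t)) \<and>
     (AE \<omega> in M. X 0 \<omega> = 0 \<and> X 1 \<omega> = 0) \<and>
     (\<forall>\<omega>\<in>space M. continuous_on {0..1} (\<lambda>t. X t \<omega>))"

definition prob_density_01 :: "(real \<Rightarrow> real) \<Rightarrow> bool" where
  "prob_density_01 \<mu> \<longleftrightarrow> \<mu> \<in> borel_measurable borel \<and> (\<forall>t. 0 \<le> \<mu> t) \<and>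
     (\<forall>t. t \<notin> {0..1} \<longrightarrow> \<mu> t = 0) \<and> integrable lborel \<mu> \<and> (\<integral>t. \<mu> t \<partial>lborel) = 1"

definition M0 :: "(real \<Rightarrow> real) \<Rightarrow> real \<Rightarrow> real" where
  "M0 \<mu> t = (LBINT s=0..t. \<mu> s)"

definition M1 :: "(real \<Rightarrow> real) \<Rightarrow> real \<Rightarrow> real" where
  "M1 \<mu> t = (LBINT s=0..t. M0 \<mu> s)"

definition M2 :: "(real \<Rightarrow> real) \<Rightarrow> real \<Rightarrow> real" where
  "M2 \<mu> t = (LBINT s=0..t. M1 \<mu> s)"

end

theory Submission
  imports Defs
begin

text \<open>
  Paths of the bridge are continuous, so \<open>(t, \<omega>) \<mapsto> X t \<omega>\<close> is jointly measurable and
  Fubini gives \<open>E \<integral>\<^sub>0\<^sup>1 X(t)\<^sup>2 \<mu>(t) dt = \<integral>\<^sub>0\<^sup>1 \<mu>(t) E X(t)\<^sup>2 dt = \<integral>\<^sub>0\<^sup>1 t (1 - t) \<mu>(t) dt\<close>.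
  Fubini on the triangle \<open>0 < u < s < 1\<close> (Cauchy's formula for repeated integration) gives
  \<open>M\<^sub>1(1) = \<integral>\<^sub>0\<^sup>1 (1 - u) \<mu>(u) du\<close> and \<open>M\<^sub>2(1) = \<integral>\<^sub>0\<^sup>1 (1 - u)\<^sup>2/2 \<mu>(u) du\<close>, and
  \<open>t (1 - t) = (1 - t) - (1 - t)\<^sup>2\<close> finishes the computation.
\<close>

lemma interval_integral_eq_integral_indicator:
  fixes a b :: real and f :: "real \<Rightarrow> real"
  assumes "a \<le> b"
  shows "(LBINT x=a..b. f x) = (\<integral>x. indicator {a<..<b} x * f x \<partial>lborel)"
  using assms by (simp add: interval_lebesgue_integral_le_eq set_lebesgue_integral_def)

lemma borel_measurable_interval_integral_upper[measurable]:
  fixes a :: real and f :: "real \<Rightarrow> real"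
  assumes [measurable]: "f \<in> borel_measurable borel"
  shows "(\<lambda>s::real. LBINT u=a..s. f u) \<in> borel_measurable borel"
proof -
  have "(LBINT u=a..s. f u) = (if a \<le> s then \<integral>u. (if a < u \<and> u < s then f u else 0) \<partial>lborel
      else - (\<integral>u. (if s < u \<and> u < a then f u else 0) \<partial>lborel))" for s :: real
    by (cases "a \<le> s") (simp_all add: interval_integral_eq_integral_indicator
        interval_lebesgue_integral_gt_eq' indicator_times_eq_if)
  then show ?thesis by simp
qed

lemma set_integrable_bounded_mult:
  fixes f w :: "'a \<Rightarrow> real"
  assumes f: "set_integrable M A f" and [measurable]: "w \<in> borel_measurable M"
    and bound: "\<And>x. x \<in> A \<Longrightarrow> \<bar>w x\<bar> \<le> C"
  shows "set_integrable M A (\<lambda>x. w x * f x)"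
  unfolding set_integrable_def
proof (rule Bochner_Integration.integrable_bound)
  show "integrable M (\<lambda>x. C * (indicator A x *\<^sub>R f x))"
    using f by (simp add: set_integrable_def)
  have "(\<lambda>x. indicator A x *\<^sub>R f x) \<in> borel_measurable M"
    using f by (simp add: set_integrable_def)
  then show "(\<lambda>x. indicator A x *\<^sub>R (w x * f x)) \<in> borel_measurable M"
    by (simp add: mult.left_commute)
  show "AE x in M. norm (indicator A x *\<^sub>R (w x * f x)) \<le> norm (C * (indicator A x *\<^sub>R f x))"
    using bound by (intro AE_I2)
      (force simp: indicator_def abs_mult intro!: mult_right_mono intro: order_trans[OF _ abs_ge_self])
qed

lemma set_integrable_Ioo_continuous_on:
  fixes a b :: real and f :: "real \<Rightarrow> real"
  assumes "continuous_on {a..b} f"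
  shows "set_integrable lborel {a<..<b} f"
  by (rule set_integrable_subset[OF borel_integrable_atLeastAtMost'[OF assms]]) auto

lemma abs_interval_integral_le:
  fixes a b s :: real and f :: "real \<Rightarrow> real"
  assumes f: "set_integrable lborel {a<..<b} f" and "a \<le> s" "s \<le> b"
  shows "\<bar>LBINT u=a..s. f u\<bar> \<le> (\<integral>u. indicator {a<..<b} u * \<bar>f u\<bar> \<partial>lborel)"
proof -
  have "set_integrable lborel {a<..<s} f"
    by (rule set_integrable_subset[OF f]) (use assms in auto)
  then have "integrable lborel (\<lambda>u. \<bar>indicator {a<..<s} u * f u\<bar>)"
    by (simp add: set_integrable_def)
  moreover have "integrable lborel (\<lambda>u. indicator {a<..<b} u * \<bar>f u\<bar>)"
    using set_integrable_abs[OF f] by (simp add: set_integrable_def)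
  ultimately have "(\<integral>u. \<bar>indicator {a<..<s} u * f u\<bar> \<partial>lborel)
      \<le> (\<integral>u. indicator {a<..<b} u * \<bar>f u\<bar> \<partial>lborel)"
    by (rule integral_mono) (use assms in \<open>auto simp: indicator_def\<close>)
  moreover have "\<bar>LBINT u=a..s. f u\<bar> \<le> (\<integral>u. \<bar>indicator {a<..<s} u * f u\<bar> \<partial>lborel)"
    using assms by (simp add: interval_integral_eq_integral_indicator integral_abs_bound)
  ultimately show ?thesis by linarith
qed

lemma set_integrable_interval_integral_upper:
  fixes a b :: real and f :: "real \<Rightarrow> real"
  assumes [measurable]: "f \<in> borel_measurable borel" and f: "set_integrable lborel {a<..<b} f"
  shows "set_integrable lborel {a<..<b} (\<lambda>s. LBINT u=a..s. f u)"
proof -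
  have "set_integrable lborel {a<..<b} (\<lambda>s. (LBINT u=a..s. f u) * 1)"
    by (rule set_integrable_bounded_mult[OF set_integrable_Ioo_continuous_on,
          where C="\<integral>u. indicator {a<..<b} u * \<bar>f u\<bar> \<partial>lborel"])
       (use abs_interval_integral_le[OF f] in auto)
  then show ?thesis by simp
qed

lemma (in pair_sigma_finite) integrable_product:
  fixes f g :: "_ \<Rightarrow> real"
  assumes f: "integrable M1 f" and g: "integrable M2 g"
  shows "integrable (M1 \<Otimes>\<^sub>M M2) (\<lambda>(x, y). f x * g y)"
proof (rule integrableI_bounded)
  have [measurable]: "f \<in> borel_measurable M1" "g \<in> borel_measurable M2"
    using f g by auto
  show "(\<lambda>(x, y). f x * g y) \<in> borel_measurable (M1 \<Otimes>\<^sub>M M2)"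
    by measurable
  have "(\<integral>\<^sup>+p. ennreal (norm ((\<lambda>(x, y). f x * g y) p)) \<partial>(M1 \<Otimes>\<^sub>M M2))
      = (\<integral>\<^sup>+x. \<integral>\<^sup>+y. ennreal (norm (f x)) * ennreal (norm (g y)) \<partial>M2 \<partial>M1)"
    by (simp add: M2.nn_integral_fst[symmetric] abs_mult ennreal_mult)
  also have "\<dots> = (\<integral>\<^sup>+x. ennreal (norm (f x)) \<partial>M1) * (\<integral>\<^sup>+y. ennreal (norm (g y)) \<partial>M2)"
    by (simp add: nn_integral_cmult nn_integral_multc)
  also have "\<dots> < \<infinity>"
    using f g by (simp add: integrable_iff_bounded ennreal_mult_less_top)
  finally show "(\<integral>\<^sup>+p. ennreal (norm ((\<lambda>(x, y). f x * g y) p)) \<partial>(M1 \<Otimes>\<^sub>M M2)) < \<infinity>" .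
qed

lemma interval_integral_triangle_swap:
  fixes f g :: "real \<Rightarrow> real" and a b :: real
  assumes "a \<le> b" and [measurable]: "f \<in> borel_measurable borel" "g \<in> borel_measurable borel"
    and f: "set_integrable lborel {a<..<b} f" and g: "set_integrable lborel {a<..<b} g"
  shows "(LBINT s=a..b. g s * (LBINT u=a..s. f u)) = (LBINT u=a..b. f u * (LBINT s=u..b. g s))"
proof -
  define h where "h s u = (if a < u \<and> u < s \<and> s < b then g s * f u else 0)" for s u
  have "integrable (lborel \<Otimes>\<^sub>M lborel) (\<lambda>(s, u). h s u)"
  proof (rule Bochner_Integration.integrable_bound)
    show "integrable (lborel \<Otimes>\<^sub>M lborel)
        (\<lambda>(s, u). (indicator {a<..<b} s * g s) * (indicator {a<..<b} u * f u))"
      using lborel_pair.integrable_product f g by (simp add: set_integrable_def)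
    show "AE p in lborel \<Otimes>\<^sub>M lborel. norm ((\<lambda>(s, u). h s u) p)
        \<le> norm ((\<lambda>(s, u). (indicator {a<..<b} s * g s) * (indicator {a<..<b} u * f u)) p)"
      by (intro AE_I2) (auto simp: h_def indicator_def)
  qed (simp add: h_def)
  then have "(\<integral>u. \<integral>s. h s u \<partial>lborel \<partial>lborel) = (\<integral>s. \<integral>u. h s u \<partial>lborel \<partial>lborel)"
    by (rule lborel_pair.Fubini_integral)
  moreover have "(\<integral>u. h s u \<partial>lborel) = indicator {a<..<b} s * (g s * (LBINT u=a..s. f u))" for s
  proof (cases "a < s \<and> s < b")
    case True
    then have "(\<integral>u. h s u \<partial>lborel) = (\<integral>u. g s * (indicator {a<..<s} u * f u) \<partial>lborel)"
      by (intro Bochner_Integration.integral_cong) (auto simp: h_def indicator_def)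
    then show ?thesis
      using True by (simp add: interval_integral_eq_integral_indicator)
  next
    case False
    then have "\<And>u. h s u = 0" by (auto simp: h_def)
    with False show ?thesis by simp
  qed
  moreover have "(\<integral>s. h s u \<partial>lborel) = indicator {a<..<b} u * (f u * (LBINT s=u..b. g s))" for u
  proof (cases "a < u \<and> u < b")
    case True
    then have "(\<integral>s. h s u \<partial>lborel) = (\<integral>s. f u * (indicator {u<..<b} s * g s) \<partial>lborel)"
      by (intro Bochner_Integration.integral_cong) (auto simp: h_def indicator_def)
    then show ?thesis
      using True by (simp add: interval_integral_eq_integral_indicator)
  next
    case False
    then have "\<And>s. h s u = 0" by (auto simp: h_def)
    with False show ?thesis by simp
  qed
  ultimately show ?thesis
    using \<open>a \<le> b\<close> by (simp add: interval_integral_eq_integral_indicator)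
qed

lemma M1_one_eq:
  assumes [measurable]: "\<mu> \<in> borel_measurable borel" and \<mu>: "set_integrable lborel {0<..<1} \<mu>"
  shows "M1 \<mu> 1 = (LBINT u=0..1. (1 - u) * \<mu> u)"
proof -
  have "M1 \<mu> 1 = (LBINT s=0..1. 1 * (LBINT u=0..s. \<mu> u))"
    by (simp add: M1_def M0_def one_ereal_def)
  also have "\<dots> = (LBINT u=0..1. \<mu> u * (LBINT s=u..1. 1))"
    using interval_integral_triangle_swap[of 0 1 \<mu> "\<lambda>_. 1"] \<mu> set_integrable_Ioo_continuous_on
    by (simp add: zero_ereal_def one_ereal_def)
  also have "\<dots> = (LBINT u=0..1. (1 - u) * \<mu> u)"
    by (simp add: one_ereal_def mult.commute)
  finally show ?thesis .
qed

lemma interval_integral_upper_minus: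
  fixes u b :: real
  shows "(LBINT s=u..b. b - s) = (b - u)\<^sup>2 / 2"
proof -
  have "(LBINT s=u..b. b - s) = (\<lambda>s. - (b - s)\<^sup>2 / 2) b - (\<lambda>s. - (b - s)\<^sup>2 / 2) u"
    by (rule interval_integral_FTC_finite)
       (auto intro!: continuous_intros derivative_eq_intros
         simp: has_real_derivative_iff_has_vector_derivative[symmetric] field_simps)
  then show ?thesis by simp
qed

lemma M2_one_eq:
  assumes [measurable]: "\<mu> \<in> borel_measurable borel" and \<mu>: "set_integrable lborel {0<..<1} \<mu>"
  shows "M2 \<mu> 1 = (LBINT u=0..1. (1 - u)\<^sup>2 / 2 * \<mu> u)"
proof -
  have M0_eq: "M0 \<mu> = (\<lambda>s. LBINT u=0..s. \<mu> u)"
    by (simp add: M0_def fun_eq_iff zero_ereal_def)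
  have "M2 \<mu> 1 = (LBINT s=0..1. 1 * (LBINT u=0..s. M0 \<mu> u))"
    by (simp add: M2_def M1_def one_ereal_def)
  also have "\<dots> = (LBINT u=0..1. M0 \<mu> u * (LBINT s=u..1. 1))"
    using interval_integral_triangle_swap[of 0 1 "M0 \<mu>" "\<lambda>_. 1"]
      set_integrable_interval_integral_upper[OF _ \<mu>] set_integrable_Ioo_continuous_on
    by (simp add: M0_eq zero_ereal_def one_ereal_def)
  also have "\<dots> = (LBINT s=0..1. (1 - s) * (LBINT u=0..s. \<mu> u))"
    by (simp add: M0_def one_ereal_def mult.commute)
  also have "\<dots> = (LBINT u=0..1. \<mu> u * (LBINT s=u..1. 1 - s))"
    using interval_integral_triangle_swap[of 0 1 \<mu> "\<lambda>s. 1 - s"] \<mu>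
      set_integrable_Ioo_continuous_on[of 0 1 "\<lambda>s. 1 - s"]
    by (simp add: continuous_on_diff zero_ereal_def one_ereal_def)
  also have "\<dots> = (LBINT u=0..1. (1 - u)\<^sup>2 / 2 * \<mu> u)"
    by (rule interval_integral_cong)
       (simp add: interval_integral_upper_minus einterval_def one_ereal_def mult.commute)
  finally show ?thesis .
qed

lemma LIMSEQ_floor_mult_divide: "(\<lambda>n. of_int \<lfloor>t * real (Suc n)\<rfloor> / real (Suc n)) \<longlonglongrightarrow> t"
proof (rule tendsto_sandwich)
  have "t - inverse (real (Suc n)) = (t * real (Suc n) - 1) / real (Suc n)" for n
    by (simp add: field_simps)
  also have "\<dots> n \<le> of_int \<lfloor>t * real (Suc n)\<rfloor> / real (Suc n)" for n
    by (intro divide_right_mono) linarith+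
  finally show "\<forall>\<^sub>F n in sequentially.
      t - inverse (real (Suc n)) \<le> of_int \<lfloor>t * real (Suc n)\<rfloor> / real (Suc n)"
    by simp
  show "\<forall>\<^sub>F n in sequentially. of_int \<lfloor>t * real (Suc n)\<rfloor> / real (Suc n) \<le> t"
    by (intro always_eventually allI) (simp add: field_simps)
  show "(\<lambda>n. t - inverse (real (Suc n))) \<longlonglongrightarrow> t"
    using tendsto_diff[OF tendsto_const LIMSEQ_inverse_real_of_nat] by simp
qed simp

lemma borel_measurable_continuous_paths:
  fixes X :: "real \<Rightarrow> 'a \<Rightarrow> 'b::metric_space"
  assumes [measurable]: "\<And>t. X t \<in> borel_measurable M"
    and cont: "\<And>\<omega>. \<omega> \<in> space M \<Longrightarrow> continuous_on UNIV (\<lambda>t. X t \<omega>)"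
  shows "(\<lambda>(t, \<omega>). X t \<omega>) \<in> borel_measurable (borel \<Otimes>\<^sub>M M)"
proof (rule borel_measurable_LIMSEQ_metric)
  \<comment> \<open>Sampling the paths on the grid \<open>\<int> / (n + 1)\<close> takes only countably many values of \<open>t\<close>.\<close>
  fix n
  have "(\<lambda>(t, \<omega>). \<lfloor>t * real (Suc n)\<rfloor>) \<in> borel \<Otimes>\<^sub>M M \<rightarrow>\<^sub>M count_space UNIV"
    by measurable
  from measurable_compose_countable'[OF _ this, where f="\<lambda>k (t, \<omega>). X (k / real (Suc n)) \<omega>"]
  show "(\<lambda>(t, \<omega>). X (of_int \<lfloor>t * real (Suc n)\<rfloor> / real (Suc n)) \<omega>) \<in> borel_measurable (borel \<Otimes>\<^sub>M M)"
    by (simp add: split_beta')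
next
  fix p :: "real \<times> 'a" assume p: "p \<in> space (borel \<Otimes>\<^sub>M M)"
  obtain t \<omega> where [simp]: "p = (t, \<omega>)" by (cases p)
  have "\<omega> \<in> space M" using p by (simp add: space_pair_measure)
  from continuous_on_tendsto_compose[OF cont[OF this] LIMSEQ_floor_mult_divide]
  show "(\<lambda>n. case p of (t, \<omega>) \<Rightarrow> X (of_int \<lfloor>t * real (Suc n)\<rfloor> / real (Suc n)) \<omega>)
      \<longlonglongrightarrow> (case p of (t, \<omega>) \<Rightarrow> X t \<omega>)"
    by simp
qed

lemma std_brownian_bridge_second_moment:
  assumes "std_brownian_bridge M X" and "0 < t" "t < 1"
  shows "integrable M (\<lambda>\<omega>. (X t \<omega>)\<^sup>2)" and "(\<integral>\<omega>. (X t \<omega>)\<^sup>2 \<partial>M) = t * (1 - t)"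
proof -
  have "t \<in> {0..1}" using assms by simp
  with assms(1) have "(\<integral>\<omega>. X t \<omega> * X t \<omega> \<partial>M) - (\<integral>\<omega>. X t \<omega> \<partial>M)\<^sup>2 = t * (1 - t)"
    and "(\<integral>\<omega>. X t \<omega> \<partial>M) = 0"
    unfolding std_brownian_bridge_def power2_eq_square by blast+
  then show "(\<integral>\<omega>. (X t \<omega>)\<^sup>2 \<partial>M) = t * (1 - t)"
    by (simp add: power2_eq_square)
  \<comment> \<open>A non-integrable function has Bochner integral \<open>0\<close>, whereas \<open>t (1 - t) \<noteq> 0\<close>.\<close>
  then show "integrable M (\<lambda>\<omega>. (X t \<omega>)\<^sup>2)"
    using assms(2,3) not_integrable_integral_eq by fastforce
qed

text \<open>Clamping extends every path continuously to the whole real line.\<close>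

lemma std_brownian_bridge_clamped_measurable:
  assumes X: "std_brownian_bridge M X"
  shows "(\<lambda>(t, \<omega>). X (max 0 (min 1 t)) \<omega>) \<in> borel_measurable (lborel \<Otimes>\<^sub>M M)"
proof -
  have "(\<lambda>(t, \<omega>). X (max 0 (min 1 t)) \<omega>) \<in> borel_measurable (borel \<Otimes>\<^sub>M M)"
  proof (rule borel_measurable_continuous_paths)
    show "X (max 0 (min 1 t)) \<in> borel_measurable M" for t
      using X by (simp add: std_brownian_bridge_def)
    show "continuous_on UNIV (\<lambda>t. X (max 0 (min 1 t)) \<omega>)" if "\<omega> \<in> space M" for \<omega>
    proof (rule continuous_on_compose2[of "{0..1}" "\<lambda>t. X t \<omega>"])
      show "continuous_on {0..1} (\<lambda>t. X t \<omega>)"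
        using X that by (simp add: std_brownian_bridge_def)
    qed (auto intro!: continuous_intros)
  qed
  then show ?thesis
    unfolding measurable_cong_sets[OF sets_pair_measure_cong[OF sets_lborel refl] refl] .
qed

lemma std_brownian_bridge_integral_weighted_square:
  assumes "prob_space M" and X: "std_brownian_bridge M X"
    and [measurable]: "\<mu> \<in> borel_measurable borel" and \<mu>: "set_integrable lborel {0<..<1} \<mu>"
  shows "(\<integral>\<omega>. (LBINT t=0..1. (X t \<omega>)\<^sup>2 * \<mu> t) \<partial>M) = (LBINT t=0..1. t * (1 - t) * \<mu> t)"
proof -
  interpret prob_space M by fact
  interpret lborel_M: pair_sigma_finite lborel M
    by (simp add: pair_sigma_finite_def lborel.sigma_finite_measure_axioms
        sigma_finite_measure_axioms)
  note [measurable] = std_brownian_bridge_clamped_measurable[OF X]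
  \<comment> \<open>The weight \<open>c\<close> stays free so that the moments serve for both \<open>\<mu> t\<close> and \<open>\<bar>\<mu> t\<bar>\<close>.\<close>
  define h where "h c t \<omega> = indicator {0<..<1} t * ((X (max 0 (min 1 t)) \<omega>)\<^sup>2 * c)" for c t \<omega>
  have h_eq: "h c t = (if 0 < t \<and> t < 1 then (\<lambda>\<omega>. (X t \<omega>)\<^sup>2 * c) else (\<lambda>_. 0))" for c t
    by (auto simp: h_def fun_eq_iff)
  have h_integrable: "integrable M (h c t)" for c t
    using std_brownian_bridge_second_moment(1)[OF X] by (simp add: h_eq)
  have h_integral: "(\<integral>\<omega>. h c t \<omega> \<partial>M) = indicator {0<..<1} t * (t * (1 - t) * c)" for c t
    using std_brownian_bridge_second_moment(2)[OF X] by (simp add: h_eq)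
  have "norm (h (\<mu> t) t \<omega>) = h \<bar>\<mu> t\<bar> t \<omega>" for t \<omega>
    by (simp add: h_def abs_mult)
  then have "(\<lambda>t. \<integral>\<omega>. norm (h (\<mu> t) t \<omega>) \<partial>M)
      = (\<lambda>t. indicator {0<..<1} t *\<^sub>R (t * (1 - t) * \<bar>\<mu> t\<bar>))"
    by (simp add: h_integral)
  moreover have "set_integrable lborel {0<..<1} (\<lambda>t. t * (1 - t) * \<bar>\<mu> t\<bar>)"
    by (rule set_integrable_bounded_mult[OF set_integrable_abs[OF \<mu>], where C=1])
       (auto simp: abs_mult intro!: mult_le_one)
  ultimately have "integrable lborel (\<lambda>t. \<integral>\<omega>. norm (h (\<mu> t) t \<omega>) \<partial>M)"
    by (simp add: set_integrable_def)
  moreover have "(\<lambda>(t, \<omega>). h (\<mu> t) t \<omega>) \<in> borel_measurable (lborel \<Otimes>\<^sub>M M)"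
    unfolding h_def by measurable
  ultimately have "integrable (lborel \<Otimes>\<^sub>M M) (\<lambda>(t, \<omega>). h (\<mu> t) t \<omega>)"
    by (intro lborel_M.Fubini_integrable) (simp_all add: h_integrable)
  then have "(\<integral>\<omega>. \<integral>t. h (\<mu> t) t \<omega> \<partial>lborel \<partial>M) = (\<integral>t. \<integral>\<omega>. h (\<mu> t) t \<omega> \<partial>M \<partial>lborel)"
    by (rule lborel_M.Fubini_integral)
  moreover have "(LBINT t=0..1. (X t \<omega>)\<^sup>2 * \<mu> t) = (\<integral>t. h (\<mu> t) t \<omega> \<partial>lborel)" for \<omega>
    using interval_integral_eq_integral_indicator[of 0 1]
    by (auto simp: h_def zero_ereal_def one_ereal_def indicator_def
        intro!: Bochner_Integration.integral_cong)
  ultimately show ?thesis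
    using interval_integral_eq_integral_indicator[of 0 1]
    by (simp add: h_integral zero_ereal_def one_ereal_def)
qed

theorem theorem1:
  fixes M :: "'a measure" and X Y :: "real \<Rightarrow> 'a \<Rightarrow> real" and \<mu> :: "real \<Rightarrow> real"
  assumes "prob_space M"
    and "std_brownian_bridge M X" and "std_brownian_bridge M Y"
    and "prob_space.indep_var M
           (PiM {0..1} (\<lambda>_. borel)) (\<lambda>\<omega>. \<lambda>t\<in>{0..1}. X t \<omega>)
           (PiM {0..1} (\<lambda>_. borel)) (\<lambda>\<omega>. \<lambda>t\<in>{0..1}. Y t \<omega>)"
    and "prob_density_01 \<mu>"
  shows "2 * (\<integral>\<omega>. (LBINT t=0..1. (X t \<omega>)\<^sup>2 * \<mu> t) \<partial>M) = 2 * M1 \<mu> 1 - 4 * M2 \<mu> 1"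
proof -
  have [measurable]: "\<mu> \<in> borel_measurable borel" and "integrable lborel \<mu>"
    using assms(5) by (auto simp: prob_density_01_def)
  then have \<mu>: "set_integrable lborel {0<..<1} \<mu>"
    unfolding set_integrable_def by (intro integrable_mult_indicator) simp_all
  have "set_integrable lborel {0<..<1} (\<lambda>t. (1 - t) * \<mu> t)"
    by (rule set_integrable_bounded_mult[OF \<mu>, where C=1]) auto
  moreover have "set_integrable lborel {0<..<1} (\<lambda>t. (1 - t)\<^sup>2 / 2 * \<mu> t)"
    by (rule set_integrable_bounded_mult[OF \<mu>, where C=1])
       (auto intro!: order_trans[OF power_le_one])
  ultimately have "(LBINT t=0..1. (1 - t) * \<mu> t - 2 * ((1 - t)\<^sup>2 / 2 * \<mu> t))
      = M1 \<mu> 1 - 2 * M2 \<mu> 1"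
    by (simp add: M1_one_eq[OF _ \<mu>] M2_one_eq[OF _ \<mu>] interval_lebesgue_integrable_def
        zero_ereal_def one_ereal_def)
  moreover have "(LBINT t=0..1. t * (1 - t) * \<mu> t)
      = (LBINT t=0..1. (1 - t) * \<mu> t - 2 * ((1 - t)\<^sup>2 / 2 * \<mu> t))"
    by (rule interval_integral_cong) (simp add: field_simps power2_eq_square)
  ultimately show ?thesis
    using std_brownian_bridge_integral_weighted_square[OF assms(1,2) _ \<mu>] by simp
qed

end
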